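(* Let $s\ge1$, $r_1,\dots,r_s$ positive integers and $n_1,\dots,n_s$ real numbers with $0\le n_1<n_2<\cdots<n_{s-1}\le n_s-1$, and put $f(x)=(x-n_1)^{r_1}(x-n_2)^{r_2}\cdots(x-n_s)^{r_s}\in\mathbb R[x]$. For a nonconstant polynomial $p$ let $\rho(p)$ denote the maximum modulus of its complex roots. Then: (1) $f(x)-1$ has a unique real root $x_0$ in the interval $(n_s,n_s+1]$, and $\rho(f(x)-1)=x_0$. (2) If $0\le m\le n_s-1$, then $\rho((x-m)f(x)-1)<\rho(f(x)-1)$. (3) $\rho((x-n_s)f(x)-1)\ge\rho(f(x)-1)$, with equality if and only if $s=1$. *)

theory Defs
  imports "HOL-Computational_Algebra.Polynomial" Complex_Main
begin

definition root_radius :: "real poly \<Rightarrow> real" where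
  "root_radius p = Max (norm ` {z :: complex. poly (map_poly complex_of_real p) z = 0})"

text \<open>f(x) = prod_{i<s} (x - n_i)^{r_i}, indices shifted to 0..s-1.\<close>
definition fpoly :: "nat \<Rightarrow> (nat \<Rightarrow> nat) \<Rightarrow> (nat \<Rightarrow> real) \<Rightarrow> real poly" where
  "fpoly s r n = (\<Prod>i<s. [:- n i, 1:] ^ r i)"

end

theory Submission imports Defs
begin

text \<open>Let \<open>N = n\<^sub>s\<close> be the largest root of \<open>f\<close>. For \<open>|z| \<ge> N\<close> each factor satisfies
  \<open>|z - n\<^sub>i| \<ge> |z| - n\<^sub>i \<ge> 0\<close>, so \<open>|f(z)| \<ge> f(|z|)\<close>, and \<open>f\<close> increases strictly from
  \<open>f(N) = 0\<close> on \<open>[N, \<infinity>)\<close>. Hence the root radius of \<open>f - 1\<close> is the real point \<open>x\<^sub>0\<close>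
  with \<open>f(x\<^sub>0) = 1\<close>, and the same holds for \<open>(x - m) f\<close> whenever \<open>0 \<le> m \<le> N\<close>.
  So all three claims compare crossing points with 1: \<open>(x\<^sub>0 - m) f(x\<^sub>0) > 1\<close> for
  \<open>m \<le> N - 1\<close> moves the crossing of \<open>(x - m) f\<close> below \<open>x\<^sub>0\<close>, while
  \<open>(x\<^sub>0 - N) f(x\<^sub>0) \<le> 1\<close> keeps the crossing of \<open>(x - N) f\<close> at or above \<open>x\<^sub>0\<close>, with
  equality iff \<open>x\<^sub>0 = N + 1\<close>, i.e. iff \<open>f(N + 1) = 1\<close>, i.e. iff \<open>s = 1\<close>.\<close>

lemma map_poly_of_real_add:
  "map_poly of_real (p + q) = (map_poly of_real p + map_poly of_real q :: 'a::real_algebra_1 poly)"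
  by (intro poly_eqI) (simp add: coeff_map_poly)

lemma map_poly_of_real_diff:
  "map_poly of_real (p - q) = (map_poly of_real p - map_poly of_real q :: 'a::real_algebra_1 poly)"
  by (intro poly_eqI) (simp add: coeff_map_poly)

lemma map_poly_of_real_mult:
  "map_poly of_real (p * q) = (map_poly of_real p * map_poly of_real q :: 'a::{real_algebra_1,comm_ring_1} poly)"
  by (induction p) (simp_all add: map_poly_pCons map_poly_smult map_poly_of_real_add)

lemma poly_map_poly_of_real [simp]:
  "poly (map_poly of_real p) (of_real x) = (of_real (poly p x) :: 'a::{real_algebra_1,comm_ring_1})"
  by (induction p) (auto simp: map_poly_pCons)

lemma map_poly_of_real_power:
  "map_poly of_real (p ^ n) = (map_poly of_real p ^ n :: 'a::{real_algebra_1,comm_ring_1} poly)"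
  by (induction n) (simp_all add: map_poly_of_real_mult)

lemma map_poly_of_real_prod:
  "map_poly of_real (\<Prod>i\<in>A. f i) = (\<Prod>i\<in>A. map_poly of_real (f i) :: 'a::{real_algebra_1,comm_ring_1} poly)"
  by (induction A rule: infinite_finite_induct) (simp_all add: map_poly_of_real_mult)

lemma root_radius_eqI:
  assumes "p \<noteq> 0" "poly (map_poly complex_of_real p) z = 0"
    and "\<And>w. poly (map_poly complex_of_real p) w = 0 \<Longrightarrow> norm w \<le> norm z"
  shows "root_radius p = norm z"
proof -
  have "map_poly complex_of_real p \<noteq> 0"
    using \<open>p \<noteq> 0\<close> by (simp add: map_poly_eq_0_iff)
  then have "finite {z. poly (map_poly complex_of_real p) z = 0}"
    by (rule poly_roots_finite)
  then show ?thesis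
    unfolding root_radius_def using assms by (intro Max_eqI) auto
qed

lemma poly_linear_factor_mult: "poly ([:-a, 1:] * p) x = (x - a) * poly p (x :: 'a::comm_ring_1)"
  by (simp add: algebra_simps)

locale radial_lower_bound =
  fixes p :: "real poly" and M :: real
  assumes M_nonneg: "0 \<le> M"
    and vanishes: "poly p M = 0"
    and strict_mono_beyond: "\<And>x y. M \<le> x \<Longrightarrow> x < y \<Longrightarrow> poly p x < poly p y"
    and norm_lower_bound: "\<And>z. M \<le> norm z \<Longrightarrow> poly p (norm z) \<le> norm (poly (map_poly complex_of_real p) z)"
begin

lemma nonneg_beyond: "M \<le> x \<Longrightarrow> 0 \<le> poly p x"
  using strict_mono_beyond[of M x] vanishes by (cases "x = M") auto

lemma mono_beyond: "M \<le> x \<Longrightarrow> x \<le> y \<Longrightarrow> poly p x \<le> poly p y"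
  using strict_mono_beyond[of x y] by (cases "x = y") auto

lemma inj_beyond: "M \<le> x \<Longrightarrow> M \<le> y \<Longrightarrow> poly p x = poly p y \<Longrightarrow> x = y"
  using strict_mono_beyond[of x y] strict_mono_beyond[of y x] by (cases x y rule: linorder_cases) auto

lemma crossing_exists:
  assumes "M \<le> b" "1 \<le> poly p b"
  obtains x where "M < x" "x \<le> b" "poly p x = 1"
proof -
  obtain x where "M \<le> x" "x \<le> b" "poly p x = 1"
    using IVT[of "poly p" M 1 b] assms vanishes by auto
  moreover have "x \<noteq> M"
    using vanishes \<open>poly p x = 1\<close> by auto
  ultimately show ?thesis
    by (intro that) auto
qed

lemma root_radius_minus_one:
  assumes "M \<le> x0" "poly p x0 = 1"
  shows "root_radius (p - 1) = x0"
proof -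
  have "p - 1 \<noteq> 0"
    using assms vanishes by auto
  moreover have "poly (map_poly complex_of_real (p - 1)) (of_real x0) = 0"
    using assms by (simp add: map_poly_of_real_diff)
  moreover have "norm w \<le> x0" if "poly (map_poly complex_of_real (p - 1)) w = 0" for w
  proof (rule ccontr)
    assume "\<not> norm w \<le> x0"
    then have "1 < poly p (norm w)"
      using strict_mono_beyond[of x0 "norm w"] assms by simp
    also have "\<dots> \<le> norm (poly (map_poly of_real p) w)"
      using norm_lower_bound[of w] \<open>\<not> norm w \<le> x0\<close> assms by simp
    finally show False
      using that by (simp add: map_poly_of_real_diff)
  qed
  ultimately show ?thesis
    using root_radius_eqI[of "p - 1" "of_real x0"] M_nonneg assms by simp
qed

lemma mult_linear_factor:
  assumes "0 \<le> m" "m \<le> M"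
  shows "radial_lower_bound ([:-m, 1:] * p) M"
proof
  show "poly ([:-m, 1:] * p) x < poly ([:-m, 1:] * p) y" if "M \<le> x" "x < y" for x y
  proof -
    have "poly ([:-m, 1:] * p) x = (x - m) * poly p x"
      by (rule poly_linear_factor_mult)
    also have "\<dots> \<le> (y - m) * poly p x"
      using that nonneg_beyond[of x] by (intro mult_right_mono) auto
    also have "\<dots> < (y - m) * poly p y"
      using that assms strict_mono_beyond[of x y] by (intro mult_strict_left_mono) auto
    finally show ?thesis
      by (simp only: poly_linear_factor_mult)
  qed
  show "poly ([:-m, 1:] * p) (norm z) \<le> norm (poly (map_poly of_real ([:-m, 1:] * p)) z)"
    if "M \<le> norm z" for z :: complex
  proof -
    have "poly ([:-m, 1:] * p) (norm z) = (norm z - m) * poly p (norm z)"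
      by (rule poly_linear_factor_mult)
    also have "\<dots> \<le> norm (z - of_real m) * norm (poly (map_poly complex_of_real p) z)"
      using that assms norm_triangle_ineq2[of z "of_real m"] norm_lower_bound[of z] nonneg_beyond[of "norm z"]
      by (intro mult_mono) auto
    also have "\<dots> = norm (poly (map_poly complex_of_real ([:-m, 1:] * p)) z)"
      unfolding map_poly_of_real_mult poly_mult norm_mult by (simp add: map_poly_pCons)
    finally show ?thesis .
  qed
qed (use M_nonneg vanishes in auto)

lemma root_radius_mult_linear_factor_less:
  assumes "M \<le> x0" "poly p x0 = 1" "0 \<le> m" "m \<le> M" "m + 1 < x0"
  shows "root_radius ([:-m, 1:] * p - 1) < root_radius (p - 1)"
proof -
  interpret q: radial_lower_bound "[:-m, 1:] * p" M
    using assms by (intro mult_linear_factor)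
  have "poly ([:-m, 1:] * p) x0 = x0 - m"
    using assms by (simp add: poly_linear_factor_mult)
  then obtain y where "M < y" "y \<le> x0" "poly ([:-m, 1:] * p) y = 1"
    using q.crossing_exists[of x0] assms by auto
  moreover have "y \<noteq> x0"
    using \<open>poly ([:-m, 1:] * p) x0 = x0 - m\<close> \<open>poly ([:-m, 1:] * p) y = 1\<close> assms by auto
  ultimately have "root_radius ([:-m, 1:] * p - 1) < x0"
    using q.root_radius_minus_one[of y] by simp
  then show ?thesis
    using root_radius_minus_one assms by simp
qed

lemma root_radius_mult_top_factor:
  assumes "M \<le> x0" "x0 \<le> M + 1" "poly p x0 = 1"
  shows "root_radius (p - 1) \<le> root_radius ([:-M, 1:] * p - 1)"
    and "root_radius ([:-M, 1:] * p - 1) = root_radius (p - 1) \<longleftrightarrow> x0 = M + 1"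
proof -
  interpret q: radial_lower_bound "[:-M, 1:] * p" M
    using M_nonneg by (intro mult_linear_factor) auto
  have "1 \<le> poly ([:-M, 1:] * p) (M + 1)"
    unfolding poly_linear_factor_mult using mono_beyond[of x0 "M + 1"] assms by simp
  then obtain y where y: "M < y" "y \<le> M + 1" "poly ([:-M, 1:] * p) y = 1"
    using q.crossing_exists[of "M + 1"] by auto
  have "x0 \<le> y"
  proof (rule ccontr)
    assume "\<not> x0 \<le> y"
    have "(y - M) * poly p y \<le> poly p y"
      using y nonneg_beyond[of y] by (intro mult_left_le_one_le) auto
    also have "\<dots> < 1"
      using y strict_mono_beyond[of y x0] \<open>\<not> x0 \<le> y\<close> assms by simp
    finally show False
      using y(3)
      unfolding poly_linear_factor_mult by simp
  qed
  moreover have "y = x0 \<longleftrightarrow> x0 = M + 1"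
    using y assms q.inj_beyond[of y x0] by (auto simp: poly_linear_factor_mult)
  moreover have "root_radius ([:-M, 1:] * p - 1) = y"
    using q.root_radius_minus_one[of y] y by simp
  ultimately show "root_radius (p - 1) \<le> root_radius ([:-M, 1:] * p - 1)"
    and "root_radius ([:-M, 1:] * p - 1) = root_radius (p - 1) \<longleftrightarrow> x0 = M + 1"
    using root_radius_minus_one assms by auto
qed

end

lemma norm_prod_linear_factors_ge:
  fixes z :: "'a::real_normed_field"
  assumes "\<And>i. i \<in> A \<Longrightarrow> 0 \<le> a i \<and> a i \<le> norm z"
  shows "(\<Prod>i\<in>A. (norm z - a i) ^ k i) \<le> norm (\<Prod>i\<in>A. (z - of_real (a i)) ^ k i)"
proof -
  have "norm z - a i \<le> norm (z - of_real (a i))" if "i \<in> A" for i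
    using norm_triangle_ineq2[of z "of_real (a i)"] assms[OF that] by simp
  then have "(\<Prod>i\<in>A. (norm z - a i) ^ k i) \<le> (\<Prod>i\<in>A. norm (z - of_real (a i)) ^ k i)"
    using assms by (intro prod_mono conjI power_mono) auto
  also have "\<dots> = norm (\<Prod>i\<in>A. (z - of_real (a i)) ^ k i)"
    by (simp add: prod_norm[symmetric] norm_power)
  finally show ?thesis .
qed

lemma prod_linear_factors_strict_mono:
  fixes a :: "'i \<Rightarrow> real"
  assumes "finite A" "\<And>i. i \<in> A \<Longrightarrow> a i \<le> M" "j \<in> A" "a j = M" "0 < k j" "M \<le> x" "x < y"
  shows "(\<Prod>i\<in>A. (x - a i) ^ k i) < (\<Prod>i\<in>A. (y - a i) ^ k i)"
  using assms by (intro prod_mono_strict[of j] power_strict_mono power_mono conjI zero_le_power zero_less_power)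
    (force dest: assms(2))+

lemma radial_lower_bound_prod_linear_factors:
  fixes a :: "'i \<Rightarrow> real"
  assumes "finite A" "\<And>i. i \<in> A \<Longrightarrow> 0 \<le> a i \<and> a i \<le> M" "j \<in> A" "a j = M" "0 < k j"
  shows "radial_lower_bound (\<Prod>i\<in>A. [:-a i, 1:] ^ k i) M"
proof
  show "0 \<le> M"
    using assms(2)[of j] assms by simp
  show "poly (\<Prod>i\<in>A. [:-a i, 1:] ^ k i) M = 0"
    using assms by (auto simp: poly_prod prod_zero_iff)
  show "poly (\<Prod>i\<in>A. [:-a i, 1:] ^ k i) x < poly (\<Prod>i\<in>A. [:-a i, 1:] ^ k i) y"
    if "M \<le> x" "x < y" for x y
    using prod_linear_factors_strict_mono[of A a M j k x y] assms that by (simp add: poly_prod)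
  show "poly (\<Prod>i\<in>A. [:-a i, 1:] ^ k i) (norm z)
      \<le> norm (poly (map_poly complex_of_real (\<Prod>i\<in>A. [:-a i, 1:] ^ k i)) z)"
    if "M \<le> norm z" for z
    using norm_prod_linear_factors_ge[of A a z k] assms that
    by (fastforce simp: poly_prod map_poly_of_real_prod map_poly_of_real_power map_poly_pCons)
qed

lemma increasing_roots_bounds:
  fixes n :: "nat \<Rightarrow> real"
  assumes n0: "0 \<le> n 0"
    and n_incr: "\<And>i. Suc i < s - 1 \<Longrightarrow> n i < n (Suc i)"
    and n_gap: "s \<ge> 2 \<Longrightarrow> n (s - 2) \<le> n (s - 1) - 1"
    and "i < s - 1"
  shows "0 \<le> n i \<and> n i \<le> n (s - 1) - 1"
proof -
  have step: "n k \<le> n (Suc k)" if "k \<in> {..<s - 2}" for k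
    using n_incr[of k] that by fastforce
  have "n 0 \<le> n i" "n i \<le> n (s - 2)"
    using \<open>i < s - 1\<close> by (auto intro!: lift_Suc_mono_le_ivl[of "{..<s - 2}" n, OF step])
  moreover have "n (s - 2) \<le> n (s - 1) - 1"
    using n_gap \<open>i < s - 1\<close> by simp
  ultimately show ?thesis
    using n0 by simp
qed

lemma poly_fpoly_top_root_plus_one:
  fixes n :: "nat \<Rightarrow> real"
  assumes "s \<ge> 1" "\<And>i. i < s \<Longrightarrow> 0 < r i" "\<And>i. i < s - 1 \<Longrightarrow> n i \<le> n (s - 1) - 1"
  shows "1 \<le> poly (fpoly s r n) (n (s - 1) + 1)"
    and "poly (fpoly s r n) (n (s - 1) + 1) = 1 \<longleftrightarrow> s = 1"
proof -
  define N where "N = n (s - 1)"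
  have factor_ge: "1 \<le> (N + 1 - n i) ^ r i" if "i < s" for i
  proof (cases "i < s - 1")
    case False
    then have "i = s - 1"
      using that by simp
    then show ?thesis
      by (simp add: N_def)
  qed (use assms(3)[of i] N_def in auto)
  have poly_eq: "poly (fpoly s r n) (N + 1) = (\<Prod>i<s. (N + 1 - n i) ^ r i)"
    by (simp add: fpoly_def poly_prod)
  show "1 \<le> poly (fpoly s r n) (n (s - 1) + 1)"
    using factor_ge unfolding poly_eq[unfolded N_def] N_def by (intro prod_ge_1) auto
  have "1 < poly (fpoly s r n) (N + 1)" if "s \<noteq> 1"
  proof -
    have "1 < (N + 1 - n 0) ^ r 0"
      using assms(1,2) assms(3)[of 0] that unfolding N_def by (intro one_less_power) auto
    then have "(\<Prod>i<s. 1) < (\<Prod>i<s. (N + 1 - n i) ^ r i)"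
      using factor_ge assms(1)
      by (intro prod_mono_strict[of 0]) (auto intro: less_le_trans[OF zero_less_one])
    then show ?thesis
      unfolding poly_eq by simp
  qed
  moreover have "poly (fpoly s r n) (N + 1) = 1" if "s = 1"
    unfolding poly_eq using that by (simp add: N_def)
  ultimately show "poly (fpoly s r n) (n (s - 1) + 1) = 1 \<longleftrightarrow> s = 1"
    unfolding N_def by force
qed

theorem lemma6p1:
  fixes s :: nat and r :: "nat \<Rightarrow> nat" and n :: "nat \<Rightarrow> real"
  assumes s_pos: "s \<ge> 1"
    and r_pos: "\<And>i. i < s \<Longrightarrow> r i > 0"
    and n0: "0 \<le> n 0"
    and n_incr: "\<And>i. Suc i < s - 1 \<Longrightarrow> n i < n (Suc i)"
    and n_gap: "s \<ge> 2 \<Longrightarrow> n (s - 2) \<le> n (s - 1) - 1"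
  shows "(\<exists>x0. n (s - 1) < x0 \<and> x0 \<le> n (s - 1) + 1
             \<and> poly (fpoly s r n - 1) x0 = 0
             \<and> (\<forall>y. n (s - 1) < y \<and> y \<le> n (s - 1) + 1 \<and> poly (fpoly s r n - 1) y = 0 \<longrightarrow> y = x0)
             \<and> root_radius (fpoly s r n - 1) = x0)
       \<and> (\<forall>m::real. 0 \<le> m \<and> m \<le> n (s - 1) - 1 \<longrightarrow>
           root_radius ([:- m, 1:] * fpoly s r n - 1) < root_radius (fpoly s r n - 1))
       \<and> root_radius ([:- n (s - 1), 1:] * fpoly s r n - 1) \<ge> root_radius (fpoly s r n - 1)
       \<and> (root_radius ([:- n (s - 1), 1:] * fpoly s r n - 1) = root_radius (fpoly s r n - 1) \<longleftrightarrow> s = 1)"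
proof -
  define N where "N = n (s - 1)"
  have lower: "0 \<le> n i \<and> n i \<le> N - 1" if "i < s - 1" for i
    using increasing_roots_bounds[OF n0 n_incr n_gap that] unfolding N_def .
  have roots: "0 \<le> n i \<and> n i \<le> N" if "i < s" for i
    using that lower[of i] lower[of 0] n0 unfolding N_def by (cases "i = s - 1") force+
  interpret f: radial_lower_bound "fpoly s r n" N
    unfolding fpoly_def N_def
    by (rule radial_lower_bound_prod_linear_factors[where j = "s - 1"])
      (use roots r_pos s_pos in \<open>auto simp: N_def\<close>)
  have top: "1 \<le> poly (fpoly s r n) (N + 1)" "poly (fpoly s r n) (N + 1) = 1 \<longleftrightarrow> s = 1"
    using poly_fpoly_top_root_plus_one[of s r n] s_pos r_pos lower unfolding N_def by auto
  obtain x0 where x0: "N < x0" "x0 \<le> N + 1" "poly (fpoly s r n) x0 = 1"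
    using f.crossing_exists[of "N + 1"] top by auto
  have "x0 = N + 1 \<longleftrightarrow> s = 1"
    using top x0 f.inj_beyond[of x0 "N + 1"] by auto
  then show ?thesis
    using x0 f.root_radius_minus_one[of x0] f.inj_beyond[of _ x0]
      f.root_radius_mult_linear_factor_less[of x0] f.root_radius_mult_top_factor[of x0]
    unfolding N_def[symmetric] by auto
qed

end
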